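(* Let $d_1,d_2\ge 2$ and let $\rho$ be a density matrix on $\mathbb{C}^{d_1}\otimes\mathbb{C}^{d_2}$. Let $\mathcal{P}=\{P_j\}_{j=1}^{d_1^2}$ be a general SIC-POVM on $\mathbb{C}^{d_1}$ with parameter $a_1$ and $\mathcal{Q}=\{Q_k\}_{k=1}^{d_2^2}$ a general SIC-POVM on $\mathbb{C}^{d_2}$ with parameter $a_2$. Let $d=\min\{d_1^2,d_2^2\}$ and define $$J(\rho)=\max_{\sigma,\tau}\sum_{j=1}^{d}\mathrm{Tr}\big[(P_{\sigma(j)}\otimes Q_{\tau(j)})\rho\big],$$ where the maximum runs over all injective maps $\sigma:\{1,\dots,d\}\to\{1,\dots,d_1^2\}$ and $\tau:\{1,\dots,d\}\to\{1,\dots,d_2^2\}$. If $\rho$ is separable, then $$J(\rho)\le \sqrt{\frac{a_1d_1^2+1}{d_1(d_1+1)}}\,\sqrt{\frac{a_2d_2^2+1}{d_2(d_2+1)}}.$$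
   Context: A general SIC-POVM on $\mathbb{C}^{n}$ with parameter $a$ is a set of $n^2$ positive semidefinite operators $\{P_\alpha\}_{\alpha=1}^{n^2}$ on $\mathbb{C}^{n}$ such that $\sum_{\alpha=1}^{n^2}P_\alpha=I$, $\mathrm{Tr}(P_\alpha^2)=a$ for all $\alpha$, and $\mathrm{Tr}(P_\alpha P_\beta)=\frac{1-na}{n(n^2-1)}$ for all $\alpha\neq\beta$; here $\frac{1}{n^3}<a\le\frac{1}{n^2}$. A density matrix on $\mathbb{C}^{d_1}\otimes\mathbb{C}^{d_2}$ is separable if it is a convex combination of product states $\rho_A\otimes\rho_B$. *)

theory Defs
  imports Complex_Main "HOL-Library.FuncSet" "Jordan_Normal_Form.Matrix"
begin

(* Complex matrices are Jordan_Normal_Form matrices "complex mat"; indices are 0-based. *)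

definition cmat_adj :: "complex mat \<Rightarrow> complex mat" where
  "cmat_adj A = mat (dim_col A) (dim_row A) (\<lambda>(i,j). cnj (A $$ (j,i)))"

definition ctrace :: "complex mat \<Rightarrow> complex" where
  "ctrace A = (\<Sum>i<dim_row A. A $$ (i,i))"

definition psd :: "nat \<Rightarrow> complex mat \<Rightarrow> bool" where
  "psd n A \<longleftrightarrow> A \<in> carrier_mat n n \<and> cmat_adj A = A \<and>
     (\<forall>v \<in> carrier_vec n. Im (conjugate v \<bullet> (A *\<^sub>v v)) = 0 \<and> 0 \<le> Re (conjugate v \<bullet> (A *\<^sub>v v)))"

definition density :: "nat \<Rightarrow> complex mat \<Rightarrow> bool" where
  "density n \<rho> \<longleftrightarrow> psd n \<rho> \<and> ctrace \<rho> = 1"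

definition kron :: "complex mat \<Rightarrow> complex mat \<Rightarrow> complex mat" where
  "kron A B = mat (dim_row A * dim_row B) (dim_col A * dim_col B)
     (\<lambda>(i,j). A $$ (i div dim_row B, j div dim_col B) * B $$ (i mod dim_row B, j mod dim_col B))"

definition separable :: "nat \<Rightarrow> nat \<Rightarrow> complex mat \<Rightarrow> bool" where
  "separable d1 d2 \<rho> \<longleftrightarrow>
     (\<exists>m (p :: nat \<Rightarrow> real) A B.
        (\<forall>i<m. 0 \<le> p i \<and> density d1 (A i) \<and> density d2 (B i)) \<and>
        (\<Sum>i<m. p i) = 1 \<and>
        \<rho> = mat (d1 * d2) (d1 * d2)
               (\<lambda>ij. \<Sum>i<m. complex_of_real (p i) * kron (A i) (B i) $$ ij))"

definition gen_sic_povm :: "nat \<Rightarrow> real \<Rightarrow> (nat \<Rightarrow> complex mat) \<Rightarrow> bool" where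
  "gen_sic_povm n a P \<longleftrightarrow>
     1 / real n ^ 3 < a \<and> a \<le> 1 / real n ^ 2 \<and>
     (\<forall>\<alpha><n^2. psd n (P \<alpha>)) \<and>
     mat n n (\<lambda>ij. \<Sum>\<alpha><n^2. P \<alpha> $$ ij) = 1\<^sub>m n \<and>
     (\<forall>\<alpha><n^2. ctrace (P \<alpha> * P \<alpha>) = complex_of_real a) \<and>
     (\<forall>\<alpha><n^2. \<forall>\<beta><n^2. \<alpha> \<noteq> \<beta> \<longrightarrow>
        ctrace (P \<alpha> * P \<beta>) = complex_of_real ((1 - real n * a) / (real n * (real n ^ 2 - 1))))"

definition J_sic :: "nat \<Rightarrow> nat \<Rightarrow> (nat \<Rightarrow> complex mat) \<Rightarrow> (nat \<Rightarrow> complex mat) \<Rightarrow> complex mat \<Rightarrow> real" where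
  "J_sic d1 d2 P Q \<rho> =
     (let d = min (d1^2) (d2^2) in
      Max {Re (\<Sum>j<d. ctrace (kron (P (\<sigma> j)) (Q (\<tau> j)) * \<rho>)) | \<sigma> \<tau>.
             \<sigma> \<in> {..<d} \<rightarrow>\<^sub>E {..<d1^2} \<and> inj_on \<sigma> {..<d} \<and>
             \<tau> \<in> {..<d} \<rightarrow>\<^sub>E {..<d2^2} \<and> inj_on \<tau> {..<d}})"

end

(*
  Write the separable state as \<rho> = \<Sum>\<^sub>i p\<^sub>i A\<^sub>i \<otimes> B\<^sub>i. Then
  Tr((P\<^sub>\<alpha> \<otimes> Q\<^sub>\<beta>) \<rho>) = \<Sum>\<^sub>i p\<^sub>i Tr(P\<^sub>\<alpha> A\<^sub>i) Tr(Q\<^sub>\<beta> B\<^sub>i), and for each i the Cauchy-Schwarz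
  inequality along the injections \<sigma>, \<tau> bounds the correlation sum by
  sqrt(\<Sum>\<^sub>\<alpha> Tr(P\<^sub>\<alpha> A\<^sub>i)\<^sup>2) sqrt(\<Sum>\<^sub>\<beta> Tr(Q\<^sub>\<beta> B\<^sub>i)\<^sup>2).

  So everything rests on S = \<Sum>\<^sub>\<alpha> x\<^sub>\<alpha>\<^sup>2 \<le> (a n\<^sup>2 + 1) / (n (n + 1)) for a density matrix A,
  where x\<^sub>\<alpha> = Tr(P\<^sub>\<alpha> A). Put M = \<Sum>\<^sub>\<alpha> x\<^sub>\<alpha> P\<^sub>\<alpha> and let b be the off-diagonal overlap of
  the SIC-POVM. The SIC relations give Tr(A M) = S, Tr(M\<^sup>2) = b + (a - b) S and Tr M = 1/n, so
  Cauchy-Schwarz for the traceless parts of A and M, together with Tr(A\<^sup>2) \<le> 1, yields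
  (S - 1/n\<^sup>2)\<^sup>2 \<le> (1 - 1/n) (a - b) (S - 1/n\<^sup>2), which is the claimed bound.
*)

theory Submission
  imports Defs "HOL-Analysis.Convex"
begin

text \<open>Square arrays \<open>nat \<Rightarrow> nat \<Rightarrow> complex\<close> stand for \<open>n \<times> n\<close> matrices; \<open>tr_prod n f g\<close> is
  \<open>Tr(F G)\<close>.\<close>

definition entries :: "complex mat \<Rightarrow> nat \<Rightarrow> nat \<Rightarrow> complex" where
  "entries X i k = X $$ (i, k)"

definition kdelta :: "nat \<Rightarrow> nat \<Rightarrow> complex" where
  "kdelta i k = of_bool (i = k)"

definition tr_prod :: "nat \<Rightarrow> (nat \<Rightarrow> nat \<Rightarrow> complex) \<Rightarrow> (nat \<Rightarrow> nat \<Rightarrow> complex) \<Rightarrow> complex" where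
  "tr_prod n f g = (\<Sum>i<n. \<Sum>k<n. f i k * g k i)"

definition hermitian_on :: "nat \<Rightarrow> (nat \<Rightarrow> nat \<Rightarrow> complex) \<Rightarrow> bool" where
  "hermitian_on n f \<longleftrightarrow> (\<forall>i<n. \<forall>k<n. f k i = cnj (f i k))"

lemma tr_prod_commute: "tr_prod n f g = tr_prod n g f"
  unfolding tr_prod_def by (subst sum.swap) (simp add: mult.commute)

lemma tr_prod_cong:
  assumes "\<And>i k. i < n \<Longrightarrow> k < n \<Longrightarrow> f i k = f' i k"
    and "\<And>i k. i < n \<Longrightarrow> k < n \<Longrightarrow> g i k = g' i k"
  shows "tr_prod n f g = tr_prod n f' g'"
  using assms unfolding tr_prod_def by (auto intro!: sum.cong)

lemma tr_prod_sum_left: "tr_prod n (\<lambda>i k. \<Sum>\<alpha>\<in>S. q \<alpha> i k) g = (\<Sum>\<alpha>\<in>S. tr_prod n (q \<alpha>) g)"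
proof -
  have "tr_prod n (\<lambda>i k. \<Sum>\<alpha>\<in>S. q \<alpha> i k) g = (\<Sum>i<n. \<Sum>\<alpha>\<in>S. \<Sum>k<n. q \<alpha> i k * g k i)"
    unfolding tr_prod_def sum_distrib_right by (intro sum.cong refl sum.swap)
  also have "\<dots> = (\<Sum>\<alpha>\<in>S. tr_prod n (q \<alpha>) g)"
    unfolding tr_prod_def by (rule sum.swap)
  finally show ?thesis .
qed

lemma tr_prod_sum_right: "tr_prod n g (\<lambda>i k. \<Sum>\<alpha>\<in>S. q \<alpha> i k) = (\<Sum>\<alpha>\<in>S. tr_prod n g (q \<alpha>))"
  by (simp only: tr_prod_commute[of n g] tr_prod_sum_left)

lemma tr_prod_scale_left: "tr_prod n (\<lambda>i k. c * f i k) g = c * tr_prod n f g"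
  unfolding tr_prod_def by (simp add: sum_distrib_left mult.assoc)

lemma tr_prod_scale_right: "tr_prod n g (\<lambda>i k. c * f i k) = c * tr_prod n g f"
  by (simp only: tr_prod_commute[of n g] tr_prod_scale_left)

lemma tr_prod_diff_left: "tr_prod n (\<lambda>i k. f i k - g i k) h = tr_prod n f h - tr_prod n g h"
  unfolding tr_prod_def by (simp add: left_diff_distrib sum_subtractf)

lemma tr_prod_diff_right: "tr_prod n h (\<lambda>i k. f i k - g i k) = tr_prod n h f - tr_prod n h g"
  by (simp only: tr_prod_commute[of n h] tr_prod_diff_left)

lemma tr_prod_kdelta: "tr_prod n f kdelta = (\<Sum>i<n. f i i)"
  unfolding tr_prod_def kdelta_def by (simp add: of_bool_def if_distrib cong: if_cong)

lemma ctrace_mult_eq_tr_prod: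
  assumes "X \<in> carrier_mat n n" "Y \<in> carrier_mat n n"
  shows "ctrace (X * Y) = tr_prod n (entries X) (entries Y)"
  using assms unfolding ctrace_def tr_prod_def entries_def
  by (auto simp: scalar_prod_def lessThan_atLeast0 intro!: sum.cong)

lemma ctrace_eq_tr_prod_kdelta: "X \<in> carrier_mat n n \<Longrightarrow> ctrace X = tr_prod n (entries X) kdelta"
  unfolding ctrace_def tr_prod_kdelta entries_def by simp

lemma psd_carrier: "psd n X \<Longrightarrow> X \<in> carrier_mat n n"
  unfolding psd_def by simp

lemma psd_hermitian_on: "psd n X \<Longrightarrow> hermitian_on n (entries X)"
proof -
  assume "psd n X"
  then have X: "X \<in> carrier_mat n n" and adj: "cmat_adj X = X"
    unfolding psd_def by auto
  have "X $$ (k, i) = cnj (X $$ (i, k))" if "i < n" "k < n" for i k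
  proof -
    have "cmat_adj X $$ (k, i) = cnj (X $$ (i, k))"
      using X that unfolding cmat_adj_def by auto
    then show ?thesis
      by (simp only: adj)
  qed
  then show ?thesis
    unfolding hermitian_on_def entries_def by blast
qed

lemma hermitian_onD: "hermitian_on n f \<Longrightarrow> i < n \<Longrightarrow> k < n \<Longrightarrow> cnj (f i k) = f k i"
  unfolding hermitian_on_def by (metis complex_cnj_cnj)

lemma tr_prod_hermitian:
  "hermitian_on n g \<Longrightarrow> tr_prod n f g = (\<Sum>i<n. \<Sum>k<n. f i k * cnj (g i k))"
  unfolding tr_prod_def by (intro sum.cong refl) (simp add: hermitian_onD)

lemma tr_prod_hermitian_real:
  assumes "hermitian_on n f" "hermitian_on n g"
  shows "tr_prod n f g = of_real (Re (tr_prod n f g))"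
proof -
  have "cnj (tr_prod n f g) = tr_prod n g f"
    unfolding tr_prod_hermitian[OF assms(2)] tr_prod_hermitian[OF assms(1)]
    by (simp add: cnj_sum mult.commute)
  then have "cnj (tr_prod n f g) = tr_prod n f g"
    by (simp add: tr_prod_commute)
  then show ?thesis
    by (simp add: complex_eq_iff)
qed

lemma tr_prod_self:
  assumes "hermitian_on n f"
  shows "Re (tr_prod n f f) = (\<Sum>i<n. \<Sum>k<n. (cmod (f i k))\<^sup>2)"
proof -
  have "tr_prod n f f = (\<Sum>i<n. \<Sum>k<n. of_real ((cmod (f i k))\<^sup>2))"
    unfolding tr_prod_hermitian[OF assms] by (intro sum.cong refl) (rule complex_norm_square[symmetric])
  then show ?thesis
    by simp
qed

lemma Re_sum_mult_cnj_cauchy_schwarz: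
  fixes u v :: "'a \<Rightarrow> complex"
  shows "(Re (\<Sum>i\<in>I. u i * cnj (v i)))\<^sup>2 \<le> (\<Sum>i\<in>I. (cmod (u i))\<^sup>2) * (\<Sum>i\<in>I. (cmod (v i))\<^sup>2)"
proof -
  have "\<bar>Re (\<Sum>i\<in>I. u i * cnj (v i))\<bar> \<le> cmod (\<Sum>i\<in>I. u i * cnj (v i))"
    by (rule abs_Re_le_cmod)
  also have "\<dots> \<le> (\<Sum>i\<in>I. cmod (u i) * cmod (v i))"
    by (rule order_trans[OF norm_sum]) (simp add: norm_mult)
  finally have "(Re (\<Sum>i\<in>I. u i * cnj (v i)))\<^sup>2 \<le> (\<Sum>i\<in>I. cmod (u i) * cmod (v i))\<^sup>2"
    by (metis abs_ge_zero power2_abs power_mono)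
  also have "\<dots> \<le> (\<Sum>i\<in>I. (cmod (u i))\<^sup>2) * (\<Sum>i\<in>I. (cmod (v i))\<^sup>2)"
    by (rule Cauchy_Schwarz_ineq_sum)
  finally show ?thesis .
qed

lemma tr_prod_cauchy_schwarz:
  assumes "hermitian_on n f" "hermitian_on n g"
  shows "(Re (tr_prod n f g))\<^sup>2 \<le> Re (tr_prod n f f) * Re (tr_prod n g g)"
proof -
  have pairs: "(\<Sum>i<n. \<Sum>k<n. h i k) = (\<Sum>p\<in>{..<n} \<times> {..<n}. h (fst p) (snd p))" for h :: "nat \<Rightarrow> nat \<Rightarrow> 'a::comm_monoid_add"
    by (simp add: sum.cartesian_product case_prod_unfold)
  show ?thesis
    using Re_sum_mult_cnj_cauchy_schwarz[of "\<lambda>p. f (fst p) (snd p)" "\<lambda>p. g (fst p) (snd p)" "{..<n} \<times> {..<n}"]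
    unfolding tr_prod_self[OF assms(1)] tr_prod_self[OF assms(2)]
    unfolding tr_prod_hermitian[OF assms(2)] pairs .
qed

lemma hermitian_on_kdelta_shift:
  assumes "hermitian_on n f"
  shows "hermitian_on n (\<lambda>i k. f i k - of_real c * kdelta i k)"
  unfolding hermitian_on_def
proof (intro allI impI)
  fix i k assume "i < n" "k < n"
  then show "f k i - of_real c * kdelta k i = cnj (f i k - of_real c * kdelta i k)"
    using hermitian_onD[OF assms, of i k] by (simp add: kdelta_def)
qed

lemma hermitian_on_real_combination:
  assumes "\<And>\<alpha>. \<alpha> \<in> S \<Longrightarrow> hermitian_on n (q \<alpha>)"
  shows "hermitian_on n (\<lambda>i k. \<Sum>\<alpha>\<in>S. of_real (x \<alpha>) * q \<alpha> i k)"
  unfolding hermitian_on_def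
proof (intro allI impI)
  fix i k assume "i < n" "k < n"
  then show "(\<Sum>\<alpha>\<in>S. of_real (x \<alpha>) * q \<alpha> k i) = cnj (\<Sum>\<alpha>\<in>S. of_real (x \<alpha>) * q \<alpha> i k)"
    unfolding cnj_sum by (intro sum.cong refl) (simp add: hermitian_onD[OF assms])
qed

lemma tr_prod_kdelta_kdelta: "tr_prod n kdelta kdelta = of_nat n"
  by (simp add: tr_prod_kdelta kdelta_def)

lemma tr_prod_centered_cauchy_schwarz:
  assumes f: "hermitian_on n f" and g: "hermitian_on n g" and "n > 0"
    and tr_f: "tr_prod n f kdelta = of_real u" and tr_g: "tr_prod n g kdelta = of_real v"
  shows "(Re (tr_prod n f g) - u * v / n)\<^sup>2
           \<le> (Re (tr_prod n f f) - u\<^sup>2 / n) * (Re (tr_prod n g g) - v\<^sup>2 / n)"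
proof -
  \<comment> \<open>Cauchy-Schwarz for the traceless parts \<open>f - (u/n) I\<close> and \<open>g - (v/n) I\<close>.\<close>
  define center where "center h t = (\<lambda>i k. h i k - of_real (t / n) * kdelta i k)" for h t
  have expand: "Re (tr_prod n (center h s) (center h' t)) = Re (tr_prod n h h') - s * t / n"
    if "tr_prod n h kdelta = of_real s" "tr_prod n h' kdelta = of_real t" for h h' s t
    unfolding center_def tr_prod_diff_left tr_prod_diff_right tr_prod_scale_left tr_prod_scale_right
      tr_prod_kdelta_kdelta tr_prod_commute[of n kdelta] that
    using \<open>n > 0\<close> by (simp add: field_simps power2_eq_square)
  have "(Re (tr_prod n (center f u) (center g v)))\<^sup>2
          \<le> Re (tr_prod n (center f u) (center f u)) * Re (tr_prod n (center g v) (center g v))"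
    unfolding center_def by (intro tr_prod_cauchy_schwarz hermitian_on_kdelta_shift f g)
  then show ?thesis
    by (simp add: expand tr_f tr_g power2_eq_square)
qed

lemma quadratic_form_two_point:
  assumes X: "X \<in> carrier_mat n n" and "i < n" "k < n"
    and v: "v = vec n (\<lambda>j. (if j = i then \<alpha> else 0) + (if j = k then \<beta> else 0))"
  shows "conjugate v \<bullet> (X *\<^sub>v v)
           = cnj \<alpha> * (X $$ (i, i) * \<alpha> + X $$ (i, k) * \<beta>) + cnj \<beta> * (X $$ (k, i) * \<alpha> + X $$ (k, k) * \<beta>)"
proof -
  have Xv: "(X *\<^sub>v v) $ j = X $$ (j, i) * \<alpha> + X $$ (j, k) * \<beta>" if "j < n" for j
  proof -
    have "(X *\<^sub>v v) $ j = (\<Sum>l<n. (\<alpha> * of_bool (l = i) + \<beta> * of_bool (l = k)) * X $$ (j, l))"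
      using X that unfolding v by (auto simp: mult_mat_vec_def scalar_prod_def lessThan_atLeast0 intro!: sum.cong)
    also have "\<dots> = X $$ (j, i) * \<alpha> + X $$ (j, k) * \<beta>"
      using assms(2,3) by (simp add: distrib_right sum.distrib mult.assoc sum_of_bool_mult_eq flip: sum_distrib_left)
    finally show ?thesis .
  qed
  have "conjugate v \<bullet> (X *\<^sub>v v) = (\<Sum>j<n. (cnj \<alpha> * of_bool (j = i) + cnj \<beta> * of_bool (j = k)) * (X *\<^sub>v v) $ j)"
    using X unfolding v scalar_prod_def by (auto simp: lessThan_atLeast0 intro!: sum.cong)
  also have "\<dots> = cnj \<alpha> * (X *\<^sub>v v) $ i + cnj \<beta> * (X *\<^sub>v v) $ k"
    using assms(2,3) by (simp add: distrib_right sum.distrib mult.assoc sum_of_bool_mult_eq flip: sum_distrib_left)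
  finally show ?thesis
    using assms(2,3) by (simp add: Xv)
qed

lemma psd_diag_nonneg:
  assumes "psd n X" "i < n"
  shows "0 \<le> Re (X $$ (i, i))"
proof -
  define v where "v = vec n (\<lambda>j. (if j = i then 1 else 0) + (if j = i then 0 else 0 :: complex))"
  have "0 \<le> Re (conjugate v \<bullet> (X *\<^sub>v v))"
    using assms(1) unfolding psd_def v_def by simp
  also have "conjugate v \<bullet> (X *\<^sub>v v) = X $$ (i, i)"
    using quadratic_form_two_point[OF psd_carrier[OF assms(1)] assms(2) assms(2) v_def] by simp
  finally show ?thesis .
qed

lemma nonneg_quadratic_imp_le:
  fixes p q m :: real
  assumes quad: "\<And>t. 0 \<le> t\<^sup>2 * p - 2 * t * m + m * q" and "0 \<le> p" "0 \<le> q" "0 \<le> m"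
  shows "m \<le> p * q"
proof (cases "q > 0")
  case True
  have "0 \<le> q\<^sup>2 * p - 2 * q * m + m * q" by (rule quad)
  also have "\<dots> = q * (p * q - m)" by (simp add: algebra_simps power2_eq_square)
  finally show ?thesis
    using True by (simp add: zero_le_mult_iff)
next
  case False
  with assms have "q = 0" by simp
  show ?thesis
  proof (rule ccontr)
    assume "\<not> m \<le> p * q"
    then have "m > 0" using \<open>q = 0\<close> by simp
    define t where "t = m / (p + 1)"
    have "t > 0" "t * p < m"
      unfolding t_def using \<open>m > 0\<close> \<open>0 \<le> p\<close> by (simp_all add: field_simps)
    then have "t * (t * p - 2 * m) < 0"
      using \<open>m > 0\<close> by (simp add: mult_pos_neg)
    with quad[of t] \<open>q = 0\<close> show False
      by (simp add: algebra_simps power2_eq_square)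
  qed
qed

lemma psd_entry_norm_sq_le:
  assumes psd: "psd n X" and "i < n" "k < n"
  shows "(cmod (X $$ (i, k)))\<^sup>2 \<le> Re (X $$ (i, i)) * Re (X $$ (k, k))"
proof -
  have X: "X \<in> carrier_mat n n" by (rule psd_carrier[OF psd])
  define z where "z = X $$ (k, i)"
  have z: "X $$ (i, k) = cnj z"
    using hermitian_onD[OF psd_hermitian_on[OF psd] assms(3,2)] unfolding z_def entries_def by simp
  define m where "m = (cmod z)\<^sup>2"
  have "0 \<le> t\<^sup>2 * Re (X $$ (i, i)) - 2 * t * m + m * Re (X $$ (k, k))" for t :: real
  proof -
    define v where "v = vec n (\<lambda>j. (if j = i then of_real t else 0) + (if j = k then - z else 0))"
    have "0 \<le> Re (conjugate v \<bullet> (X *\<^sub>v v))"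
      using psd unfolding psd_def v_def by simp
    also have "conjugate v \<bullet> (X *\<^sub>v v)
        = of_real t * of_real t * X $$ (i, i) - of_real t * (cnj z * z + z * cnj z) + z * cnj z * X $$ (k, k)"
      unfolding quadratic_form_two_point[OF X assms(2,3) v_def] z z_def[symmetric] by (simp add: algebra_simps)
    also have "Re \<dots> = t\<^sup>2 * Re (X $$ (i, i)) - 2 * t * m + m * Re (X $$ (k, k))"
      unfolding m_def cmod_power2 by (simp add: power2_eq_square algebra_simps)
    finally show ?thesis .
  qed
  then have "m \<le> Re (X $$ (i, i)) * Re (X $$ (k, k))"
    by (rule nonneg_quadratic_imp_le) (simp_all add: m_def psd_diag_nonneg[OF psd] assms)
  then show ?thesis
    by (simp add: z m_def)
qed

lemma density_purity_le_one:
  assumes "density n A"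
  shows "Re (tr_prod n (entries A) (entries A)) \<le> 1"
proof -
  have psd: "psd n A" and tr: "ctrace A = 1"
    using assms unfolding density_def by auto
  have "Re (tr_prod n (entries A) (entries A)) = (\<Sum>i<n. \<Sum>k<n. (cmod (A $$ (i, k)))\<^sup>2)"
    unfolding tr_prod_self[OF psd_hermitian_on[OF psd]] entries_def ..
  also have "\<dots> \<le> (\<Sum>i<n. \<Sum>k<n. Re (A $$ (i, i)) * Re (A $$ (k, k)))"
    by (intro sum_mono psd_entry_norm_sq_le[OF psd]) auto
  also have "\<dots> = (Re (ctrace A))\<^sup>2"
    using psd_carrier[OF psd] by (simp add: ctrace_def sum_product power2_eq_square)
  finally show ?thesis
    using tr by simp
qed

lemma sum_mult_if_eq:
  fixes x :: "nat \<Rightarrow> real"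
  assumes "\<alpha> < N"
  shows "(\<Sum>\<beta><N. x \<beta> * (if \<alpha> = \<beta> then a else b)) = b * (\<Sum>\<beta><N. x \<beta>) + (a - b) * x \<alpha>"
proof -
  have "(\<Sum>\<beta><N. x \<beta> * (if \<alpha> = \<beta> then a else b)) = (\<Sum>\<beta><N. b * x \<beta> + (if \<alpha> = \<beta> then (a - b) * x \<beta> else 0))"
    by (rule sum.cong) (auto simp: algebra_simps)
  then show ?thesis
    using assms by (simp add: sum.distrib sum_distrib_left)
qed

lemma tr_prod_gram_combination:
  fixes p :: "nat \<Rightarrow> nat \<Rightarrow> nat \<Rightarrow> complex" and x :: "nat \<Rightarrow> real"
  assumes gram: "\<And>\<alpha> \<beta>. \<alpha> < N \<Longrightarrow> \<beta> < N \<Longrightarrow> tr_prod n (p \<alpha>) (p \<beta>) = of_real (if \<alpha> = \<beta> then a else b)"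
    and "\<alpha> < N"
  shows "tr_prod n (p \<alpha>) (\<lambda>i k. \<Sum>\<beta><N. of_real (x \<beta>) * p \<beta> i k)
           = of_real (b * (\<Sum>\<beta><N. x \<beta>) + (a - b) * x \<alpha>)"
proof -
  have "tr_prod n (p \<alpha>) (\<lambda>i k. \<Sum>\<beta><N. of_real (x \<beta>) * p \<beta> i k)
      = (\<Sum>\<beta><N. of_real (x \<beta>) * of_real (if \<alpha> = \<beta> then a else b))"
    unfolding tr_prod_sum_right tr_prod_scale_right by (intro sum.cong refl) (simp add: gram \<open>\<alpha> < N\<close>)
  also have "\<dots> = of_real (\<Sum>\<beta><N. x \<beta> * (if \<alpha> = \<beta> then a else b))"
    by (simp only: of_real_sum of_real_mult)
  finally show ?thesis
    by (simp only: sum_mult_if_eq[OF \<open>\<alpha> < N\<close>])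
qed

lemma gen_sic_povm_psd: "gen_sic_povm n a P \<Longrightarrow> \<alpha> < n\<^sup>2 \<Longrightarrow> psd n (P \<alpha>)"
  unfolding gen_sic_povm_def by blast

lemma gen_sic_povm_gram:
  assumes sic: "gen_sic_povm n a P" and "\<alpha> < n\<^sup>2" "\<beta> < n\<^sup>2"
  shows "tr_prod n (entries (P \<alpha>)) (entries (P \<beta>))
           = of_real (if \<alpha> = \<beta> then a else (1 - real n * a) / (real n * (real n ^ 2 - 1)))"
proof -
  have "tr_prod n (entries (P \<alpha>)) (entries (P \<beta>)) = ctrace (P \<alpha> * P \<beta>)"
    using ctrace_mult_eq_tr_prod[OF psd_carrier psd_carrier, OF gen_sic_povm_psd gen_sic_povm_psd, OF sic assms(2) sic assms(3)]
    by simp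
  also have "\<dots> = of_real (if \<alpha> = \<beta> then a else (1 - real n * a) / (real n * (real n ^ 2 - 1)))"
    using assms unfolding gen_sic_povm_def by auto
  finally show ?thesis .
qed

lemma gen_sic_povm_resolution:
  assumes "gen_sic_povm n a P" "i < n" "k < n"
  shows "(\<Sum>\<alpha><n\<^sup>2. entries (P \<alpha>) i k) = kdelta i k"
proof -
  have "mat n n (\<lambda>ij. \<Sum>\<alpha><n\<^sup>2. P \<alpha> $$ ij) $$ (i, k) = 1\<^sub>m n $$ (i, k)"
    using assms(1) unfolding gen_sic_povm_def by simp
  then show ?thesis
    using assms(2,3) by (simp add: entries_def kdelta_def)
qed

lemma gen_sic_povm_trace:
  assumes "n \<ge> 2" "gen_sic_povm n a P" "\<alpha> < n\<^sup>2"
  shows "tr_prod n (entries (P \<alpha>)) kdelta = of_real (1 / n)"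
proof -
  define b where "b = (1 - real n * a) / (real n * (real n ^ 2 - 1))"
  have "(2::real)\<^sup>2 \<le> real n ^ 2"
    using assms(1) by (intro power_mono) auto
  then have "real n ^ 2 - 1 \<noteq> 0"
    by simp
  have "tr_prod n (entries (P \<alpha>)) kdelta = tr_prod n (entries (P \<alpha>)) (\<lambda>i k. \<Sum>\<beta><n\<^sup>2. of_real 1 * entries (P \<beta>) i k)"
    by (rule tr_prod_cong) (simp_all add: gen_sic_povm_resolution[OF assms(2)])
  also have "\<dots> = of_real (b * (\<Sum>\<beta><n\<^sup>2. 1) + (a - b) * 1)"
    by (rule tr_prod_gram_combination) (simp_all add: gen_sic_povm_gram[OF assms(2)] b_def assms(3))
  also have "b * (\<Sum>\<beta><n\<^sup>2. 1) + (a - b) * 1 = a + b * (real n ^ 2 - 1)"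
    by (simp add: algebra_simps)
  also have "a + b * (real n ^ 2 - 1) = 1 / n"
    using \<open>real n ^ 2 - 1 \<noteq> 0\<close> assms(1) unfolding b_def by (simp add: field_simps)
  finally show ?thesis .
qed

lemma sic_bound_from_cauchy_schwarz:
  fixes n a b p S :: real
  assumes n: "n \<ge> 2" and a: "1 / n ^ 3 < a" and p: "p \<le> 1"
    and b: "b = (1 - n * a) / (n * (n\<^sup>2 - 1))"
    and cs: "(S - 1 / n\<^sup>2)\<^sup>2 \<le> (p - 1 / n) * (b + (a - b) * S - 1 / n ^ 3)"
  shows "S \<le> (a * n\<^sup>2 + 1) / (n * (n + 1))"
proof -
  define m where "m = n\<^sup>2 - 1"
  have "m > 0"
    using n power_mono[of 2 n 2] unfolding m_def by simp
  have nz: "n \<noteq> 0" "m \<noteq> 0" "n + 1 \<noteq> 0"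
    using n \<open>m > 0\<close> by auto
  define K where "K = a - b"
  have b_nm: "b * (n * m) = 1 - n * a"
    using nz unfolding b m_def[symmetric] by simp
  have K_nm: "K * (n * m) = a * n ^ 3 - 1"
    unfolding K_def left_diff_distrib b_nm by (simp add: m_def algebra_simps power2_eq_square power3_eq_cube)
  have "K > 0"
  proof -
    have "0 < K * (n * m)"
      unfolding K_nm using a n by (simp add: field_simps)
    moreover have "0 < n * m"
      using n \<open>m > 0\<close> by simp
    ultimately show ?thesis
      by (rule zero_less_mult_pos2)
  qed
  have "(b * n ^ 3 + K * n) * m = n\<^sup>2 * (b * (n * m)) + K * (n * m)"
    by (simp add: algebra_simps power2_eq_square power3_eq_cube)
  also have "\<dots> = 1 * m"
    unfolding b_nm K_nm by (simp add: m_def algebra_simps power2_eq_square power3_eq_cube)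
  finally have "b * n ^ 3 + K * n = 1"
    using nz(2) by (simp only: mult_cancel_right) simp
  then have "b + K / n\<^sup>2 = 1 / n ^ 3"
    using nz(1) by (simp add: field_simps power2_eq_square power3_eq_cube)
  then have linear: "b + (a - b) * S - 1 / n ^ 3 = K * (S - 1 / n\<^sup>2)"
    unfolding K_def by (simp add: algebra_simps)
  have "(1 - 1 / n) * K * (n\<^sup>2 * (n + 1)) = K * (n * m)"
    using nz(1) unfolding m_def by (simp add: field_simps power2_eq_square)
  then have "(1 - 1 / n) * K = (a * n ^ 3 - 1) / (n\<^sup>2 * (n + 1))"
    unfolding K_nm by (rule eq_divide_imp[rotated]) (use nz in simp)
  moreover have "1 / n\<^sup>2 = (n + 1) / (n\<^sup>2 * (n + 1))"
    using nz by simp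
  ultimately have "1 / n\<^sup>2 + (1 - 1 / n) * K = ((n + 1) + (a * n ^ 3 - 1)) / (n\<^sup>2 * (n + 1))"
    by (simp only: add_divide_distrib)
  also have "\<dots> = (n * (a * n\<^sup>2 + 1)) / (n * (n * (n + 1)))"
    by (simp add: algebra_simps power2_eq_square power3_eq_cube)
  also have "\<dots> = (a * n\<^sup>2 + 1) / (n * (n + 1))"
    using nz(1) by (rule mult_divide_mult_cancel_left)
  finally have bound: "1 / n\<^sup>2 + (1 - 1 / n) * K = (a * n\<^sup>2 + 1) / (n * (n + 1))" .
  have "S - 1 / n\<^sup>2 \<le> (1 - 1 / n) * K"
  proof (cases "S - 1 / n\<^sup>2 \<le> 0")
    case True
    moreover have "0 \<le> (1 - 1 / n) * K"
      using n \<open>K > 0\<close> by simp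
    ultimately show ?thesis by linarith
  next
    case False
    then have "(S - 1 / n\<^sup>2) * (S - 1 / n\<^sup>2) \<le> ((p - 1 / n) * K) * (S - 1 / n\<^sup>2)"
      using cs unfolding linear by (simp add: power2_eq_square mult.assoc)
    then have "S - 1 / n\<^sup>2 \<le> (p - 1 / n) * K"
      using False by simp
    also have "\<dots> \<le> (1 - 1 / n) * K"
      using p \<open>K > 0\<close> by simp
    finally show ?thesis .
  qed
  then show ?thesis
    unfolding bound[symmetric] by simp
qed

lemma gen_sic_povm_sum_sq_le:
  assumes n: "n \<ge> 2" and sic: "gen_sic_povm n a P" and A: "density n A"
  shows "(\<Sum>\<alpha><n\<^sup>2. (Re (ctrace (P \<alpha> * A)))\<^sup>2) \<le> (a * real n ^ 2 + 1) / (real n * (real n + 1))"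
proof -
  define b where "b = (1 - real n * a) / (real n * (real n ^ 2 - 1))"
  define p where "p \<alpha> = entries (P \<alpha>)" for \<alpha>
  define x where "x \<alpha> = Re (ctrace (P \<alpha> * A))" for \<alpha>
  define M where "M = (\<lambda>i k. \<Sum>\<alpha><n\<^sup>2. of_real (x \<alpha>) * p \<alpha> i k)"
  define S where "S = (\<Sum>\<alpha><n\<^sup>2. (x \<alpha>)\<^sup>2)"
  have psd_A: "psd n A" and tr_A: "ctrace A = 1"
    using A unfolding density_def by auto
  have herm_A: "hermitian_on n (entries A)"
    by (rule psd_hermitian_on[OF psd_A])
  have herm_p: "hermitian_on n (p \<alpha>)" if "\<alpha> < n\<^sup>2" for \<alpha>
    unfolding p_def using psd_hermitian_on gen_sic_povm_psd[OF sic that] .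
  have gram: "tr_prod n (p \<alpha>) (p \<beta>) = of_real (if \<alpha> = \<beta> then a else b)" if "\<alpha> < n\<^sup>2" "\<beta> < n\<^sup>2" for \<alpha> \<beta>
    unfolding p_def b_def by (rule gen_sic_povm_gram[OF sic that])
  have p_A: "tr_prod n (p \<alpha>) (entries A) = of_real (x \<alpha>)" if "\<alpha> < n\<^sup>2" for \<alpha>
  proof -
    have "tr_prod n (p \<alpha>) (entries A) = ctrace (P \<alpha> * A)"
      unfolding p_def using ctrace_mult_eq_tr_prod[OF psd_carrier[OF gen_sic_povm_psd[OF sic that]] psd_carrier[OF psd_A]] ..
    then show ?thesis
      unfolding x_def using tr_prod_hermitian_real[OF herm_p[OF that] herm_A] by simp
  qed
  have A_kdelta: "tr_prod n (entries A) kdelta = of_real 1"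
    using tr_A ctrace_eq_tr_prod_kdelta[OF psd_carrier[OF psd_A]] by simp
  have sum_x: "(\<Sum>\<alpha><n\<^sup>2. x \<alpha>) = 1"
  proof -
    have "of_real (\<Sum>\<alpha><n\<^sup>2. x \<alpha>) = (\<Sum>\<alpha><n\<^sup>2. tr_prod n (p \<alpha>) (entries A))"
      by (simp add: p_A)
    also have "\<dots> = tr_prod n kdelta (entries A)"
      unfolding tr_prod_sum_left[symmetric] p_def
      by (rule tr_prod_cong) (simp_all add: gen_sic_povm_resolution[OF sic])
    also have "\<dots> = of_real 1"
      using A_kdelta by (simp add: tr_prod_commute[of n kdelta])
    finally show ?thesis
      by (simp only: of_real_eq_iff)
  qed
  have herm_M: "hermitian_on n M"
    unfolding M_def by (rule hermitian_on_real_combination) (simp add: herm_p)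
  have p_M: "tr_prod n (p \<alpha>) M = of_real (b + (a - b) * x \<alpha>)" if "\<alpha> < n\<^sup>2" for \<alpha>
    unfolding M_def using tr_prod_gram_combination[OF gram that, of x] sum_x by simp
  have A_M: "tr_prod n (entries A) M = of_real S"
    unfolding M_def S_def tr_prod_sum_right tr_prod_scale_right
    by (simp add: tr_prod_commute[of n "entries A"] p_A power2_eq_square)
  have M_M: "tr_prod n M M = of_real (b + (a - b) * S)"
  proof -
    have "tr_prod n M M = (\<Sum>\<alpha><n\<^sup>2. of_real (x \<alpha>) * tr_prod n (p \<alpha>) M)"
      by (subst (1) M_def) (simp only: tr_prod_sum_left tr_prod_scale_left)
    also have "\<dots> = of_real (\<Sum>\<alpha><n\<^sup>2. x \<alpha> * (b + (a - b) * x \<alpha>))"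
      by (simp add: p_M of_real_sum)
    also have "(\<Sum>\<alpha><n\<^sup>2. x \<alpha> * (b + (a - b) * x \<alpha>)) = b * (\<Sum>\<alpha><n\<^sup>2. x \<alpha>) + (a - b) * S"
      unfolding S_def by (simp add: algebra_simps power2_eq_square sum.distrib sum_distrib_left sum_subtractf)
    finally show ?thesis
      by (simp add: sum_x)
  qed
  have M_kdelta: "tr_prod n M kdelta = of_real (1 / n)"
  proof -
    have "tr_prod n M kdelta = (\<Sum>\<alpha><n\<^sup>2. of_real (x \<alpha> * (1 / n)))"
      unfolding M_def tr_prod_sum_left tr_prod_scale_left p_def
      by (simp add: gen_sic_povm_trace[OF n sic])
    also have "\<dots> = of_real ((\<Sum>\<alpha><n\<^sup>2. x \<alpha>) * (1 / n))"
      by (simp only: of_real_sum sum_distrib_right)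
    finally show ?thesis
      by (simp add: sum_x)
  qed
  have "(S - 1 / n\<^sup>2)\<^sup>2 \<le> (Re (tr_prod n (entries A) (entries A)) - 1 / n) * (b + (a - b) * S - 1 / n ^ 3)"
    using tr_prod_centered_cauchy_schwarz[OF herm_A herm_M _ A_kdelta M_kdelta] n
    by (simp add: A_M M_M power2_eq_square power3_eq_cube)
  moreover have "1 / real n ^ 3 < a"
    using sic unfolding gen_sic_povm_def by simp
  ultimately have "S \<le> (a * real n ^ 2 + 1) / (real n * (real n + 1))"
    using n density_purity_le_one[OF A] by (intro sic_bound_from_cauchy_schwarz[OF _ _ _ b_def]) simp_all
  then show ?thesis
    unfolding S_def x_def .
qed

lemma sum_lessThan_add_nat:
  fixes f :: "nat \<Rightarrow> 'a::comm_monoid_add"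
  shows "(\<Sum>r<a + b. f r) = (\<Sum>r<a. f r) + (\<Sum>j<b. f (a + j))"
  by (induction b) (simp_all add: add.assoc)

lemma sum_lessThan_mult_nat:
  fixes f :: "nat \<Rightarrow> 'a::comm_monoid_add"
  shows "(\<Sum>r<m * n. f r) = (\<Sum>i<m. \<Sum>j<n. f (i * n + j))"
proof (induction m)
  case (Suc m)
  have "(\<Sum>r<Suc m * n. f r) = (\<Sum>r<m * n. f r) + (\<Sum>j<n. f (m * n + j))"
    using sum_lessThan_add_nat[of f "m * n" n] by (simp add: add.commute[of n "m * n"])
  with Suc show ?case
    by simp
qed simp

lemma kron_carrier:
  "A \<in> carrier_mat d1 d1 \<Longrightarrow> B \<in> carrier_mat d2 d2 \<Longrightarrow> kron A B \<in> carrier_mat (d1 * d2) (d1 * d2)"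
  unfolding kron_def by auto

lemma kron_index:
  assumes "A \<in> carrier_mat d1 d1" "B \<in> carrier_mat d2 d2" "i < d1" "j < d2" "k < d1" "l < d2"
  shows "kron A B $$ (i * d2 + j, k * d2 + l) = A $$ (i, k) * B $$ (j, l)"
proof -
  have "i' * d2 + j' < d1 * d2" if "i' < d1" "j' < d2" for i' j'
  proof -
    have "i' * d2 + j' < Suc i' * d2" using that by simp
    also have "\<dots> \<le> d1 * d2" using that by (intro mult_le_mono1) simp
    finally show ?thesis .
  qed
  then show ?thesis
    using assms unfolding kron_def by simp
qed

lemma ctrace_kron_mult:
  assumes P: "P \<in> carrier_mat d1 d1" and A: "A \<in> carrier_mat d1 d1"
    and Q: "Q \<in> carrier_mat d2 d2" and B: "B \<in> carrier_mat d2 d2"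
  shows "ctrace (kron P Q * kron A B) = ctrace (P * A) * ctrace (Q * B)"
proof -
  have "ctrace (kron P Q * kron A B)
      = (\<Sum>i<d1. \<Sum>j<d2. \<Sum>k<d1. \<Sum>l<d2. kron P Q $$ (i * d2 + j, k * d2 + l) * kron A B $$ (k * d2 + l, i * d2 + j))"
    unfolding ctrace_mult_eq_tr_prod[OF kron_carrier[OF P Q] kron_carrier[OF A B]] tr_prod_def entries_def
    by (simp only: sum_lessThan_mult_nat)
  also have "\<dots> = (\<Sum>i<d1. \<Sum>j<d2. \<Sum>k<d1. \<Sum>l<d2. (P $$ (i, k) * A $$ (k, i)) * (Q $$ (j, l) * B $$ (l, j)))"
    by (intro sum.cong refl) (simp add: kron_index[OF P Q] kron_index[OF A B] mult_ac)
  also have "\<dots> = (\<Sum>i<d1. \<Sum>k<d1. P $$ (i, k) * A $$ (k, i)) * (\<Sum>j<d2. \<Sum>l<d2. Q $$ (j, l) * B $$ (l, j))"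
    by (simp add: sum_product sum.swap[of _ "{..<d2}" "{..<d1}"])
  also have "\<dots> = ctrace (P * A) * ctrace (Q * B)"
    unfolding ctrace_mult_eq_tr_prod[OF P A] ctrace_mult_eq_tr_prod[OF Q B] tr_prod_def entries_def ..
  finally show ?thesis .
qed

lemma ctrace_mult_kron_mixture:
  assumes K: "K \<in> carrier_mat (d1 * d2) (d1 * d2)"
    and A: "\<And>i. i < m \<Longrightarrow> A i \<in> carrier_mat d1 d1" and B: "\<And>i. i < m \<Longrightarrow> B i \<in> carrier_mat d2 d2"
  shows "ctrace (K * mat (d1 * d2) (d1 * d2) (\<lambda>ij. \<Sum>i<m. complex_of_real (p i) * kron (A i) (B i) $$ ij))
           = (\<Sum>i<m. of_real (p i) * ctrace (K * kron (A i) (B i)))"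
proof -
  have "ctrace (K * mat (d1 * d2) (d1 * d2) (\<lambda>ij. \<Sum>i<m. complex_of_real (p i) * kron (A i) (B i) $$ ij))
      = tr_prod (d1 * d2) (entries K) (\<lambda>r s. \<Sum>i<m. of_real (p i) * entries (kron (A i) (B i)) r s)"
    unfolding ctrace_mult_eq_tr_prod[OF K mat_carrier] by (rule tr_prod_cong) (simp_all add: entries_def)
  also have "\<dots> = (\<Sum>i<m. of_real (p i) * ctrace (K * kron (A i) (B i)))"
    unfolding tr_prod_sum_right tr_prod_scale_right
    by (intro sum.cong refl) (simp add: ctrace_mult_eq_tr_prod[OF K kron_carrier[OF A B]])
  finally show ?thesis .
qed

lemma ctrace_psd_mult_real:
  assumes "psd n X" "psd n Y"
  shows "ctrace (X * Y) = of_real (Re (ctrace (X * Y)))"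
  using tr_prod_hermitian_real[OF psd_hermitian_on[OF assms(1)] psd_hermitian_on[OF assms(2)]]
  by (simp add: ctrace_mult_eq_tr_prod[OF psd_carrier[OF assms(1)] psd_carrier[OF assms(2)]])

lemma sum_inj_mult_le_sqrt:
  fixes x y :: "'b \<Rightarrow> real"
  assumes \<sigma>: "inj_on \<sigma> D" "\<sigma> ` D \<subseteq> I" and \<tau>: "inj_on \<tau> D" "\<tau> ` D \<subseteq> J"
    and "finite I" "finite J"
    and x: "(\<Sum>\<alpha>\<in>I. (x \<alpha>)\<^sup>2) \<le> c1" and y: "(\<Sum>\<beta>\<in>J. (y \<beta>)\<^sup>2) \<le> c2"
  shows "(\<Sum>j\<in>D. x (\<sigma> j) * y (\<tau> j)) \<le> sqrt c1 * sqrt c2"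
proof -
  have "(\<Sum>j\<in>D. (x (\<sigma> j))\<^sup>2) = (\<Sum>\<alpha>\<in>\<sigma> ` D. (x \<alpha>)\<^sup>2)"
    using \<sigma>(1) by (simp add: sum.reindex)
  also have "\<dots> \<le> c1"
    using \<sigma>(2) \<open>finite I\<close> x by (meson order_trans sum_mono2 zero_le_power2)
  finally have X: "(\<Sum>j\<in>D. (x (\<sigma> j))\<^sup>2) \<le> c1" .
  have "(\<Sum>j\<in>D. (y (\<tau> j))\<^sup>2) = (\<Sum>\<beta>\<in>\<tau> ` D. (y \<beta>)\<^sup>2)"
    using \<tau>(1) by (simp add: sum.reindex)
  also have "\<dots> \<le> c2"
    using \<tau>(2) \<open>finite J\<close> y by (meson order_trans sum_mono2 zero_le_power2)
  finally have Y: "(\<Sum>j\<in>D. (y (\<tau> j))\<^sup>2) \<le> c2" .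
  have "(\<Sum>j\<in>D. x (\<sigma> j) * y (\<tau> j)) \<le> sqrt ((\<Sum>j\<in>D. x (\<sigma> j) * y (\<tau> j))\<^sup>2)"
    by simp
  also have "\<dots> \<le> sqrt ((\<Sum>j\<in>D. (x (\<sigma> j))\<^sup>2) * (\<Sum>j\<in>D. (y (\<tau> j))\<^sup>2))"
    by (rule real_sqrt_le_mono, rule Cauchy_Schwarz_ineq_sum)
  also have "\<dots> \<le> sqrt (c1 * c2)"
    by (intro real_sqrt_le_mono mult_mono X Y) (simp_all add: sum_nonneg order_trans[OF _ X])
  finally show ?thesis
    by (simp add: real_sqrt_mult)
qed

lemma separable_sic_correlation_le:
  assumes d1: "d1 \<ge> 2" and d2: "d2 \<ge> 2"
    and P: "gen_sic_povm d1 a1 P" and Q: "gen_sic_povm d2 a2 Q"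
    and sep: "separable d1 d2 \<rho>"
    and \<sigma>: "inj_on \<sigma> {..<d}" "\<sigma> ` {..<d} \<subseteq> {..<d1\<^sup>2}"
    and \<tau>: "inj_on \<tau> {..<d}" "\<tau> ` {..<d} \<subseteq> {..<d2\<^sup>2}"
  shows "Re (\<Sum>j<d. ctrace (kron (P (\<sigma> j)) (Q (\<tau> j)) * \<rho>)) \<le>
           sqrt ((a1 * real d1 ^ 2 + 1) / (real d1 * (real d1 + 1))) *
           sqrt ((a2 * real d2 ^ 2 + 1) / (real d2 * (real d2 + 1)))"
    (is "_ \<le> sqrt ?c1 * sqrt ?c2")
proof -
  obtain m :: nat and p A B where
    mix: "\<And>i. i < m \<Longrightarrow> 0 \<le> p i \<and> density d1 (A i) \<and> density d2 (B i)"
    and p_sum: "(\<Sum>i<m. p i) = 1"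
    and \<rho>: "\<rho> = mat (d1 * d2) (d1 * d2) (\<lambda>ij. \<Sum>i<m. complex_of_real (p i) * kron (A i) (B i) $$ ij)"
    using sep unfolding separable_def by blast
  have psd_A: "psd d1 (A i)" and psd_B: "psd d2 (B i)" if "i < m" for i
    using mix[OF that] unfolding density_def by auto
  have psd_P: "psd d1 (P \<alpha>)" if "\<alpha> < d1\<^sup>2" for \<alpha>
    using gen_sic_povm_psd[OF P that] .
  have psd_Q: "psd d2 (Q \<beta>)" if "\<beta> < d2\<^sup>2" for \<beta>
    using gen_sic_povm_psd[OF Q that] .
  define x where "x i \<alpha> = Re (ctrace (P \<alpha> * A i))" for i \<alpha>
  define y where "y i \<beta> = Re (ctrace (Q \<beta> * B i))" for i \<beta>
  have x_real: "ctrace (P \<alpha> * A i) = of_real (x i \<alpha>)" if "\<alpha> < d1\<^sup>2" "i < m" for \<alpha> i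
    unfolding x_def by (rule ctrace_psd_mult_real[OF psd_P psd_A, OF that])
  have y_real: "ctrace (Q \<beta> * B i) = of_real (y i \<beta>)" if "\<beta> < d2\<^sup>2" "i < m" for \<beta> i
    unfolding y_def by (rule ctrace_psd_mult_real[OF psd_Q psd_B, OF that])
  have summand: "Re (ctrace (kron (P \<alpha>) (Q \<beta>) * \<rho>)) = (\<Sum>i<m. p i * (x i \<alpha> * y i \<beta>))"
    if "\<alpha> < d1\<^sup>2" "\<beta> < d2\<^sup>2" for \<alpha> \<beta>
  proof -
    have "ctrace (kron (P \<alpha>) (Q \<beta>) * \<rho>) = (\<Sum>i<m. of_real (p i) * ctrace (kron (P \<alpha>) (Q \<beta>) * kron (A i) (B i)))"
      unfolding \<rho> by (rule ctrace_mult_kron_mixture)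
        (simp_all add: kron_carrier psd_carrier psd_A psd_B psd_P psd_Q that)
    also have "\<dots> = (\<Sum>i<m. of_real (p i * (x i \<alpha> * y i \<beta>)))"
    proof (rule sum.cong[OF refl])
      fix i assume "i \<in> {..<m}"
      then have i: "i < m" by simp
      show "of_real (p i) * ctrace (kron (P \<alpha>) (Q \<beta>) * kron (A i) (B i)) = of_real (p i * (x i \<alpha> * y i \<beta>))"
        using ctrace_kron_mult[OF psd_carrier psd_carrier psd_carrier psd_carrier,
            OF psd_P[OF that(1)] psd_A[OF i] psd_Q[OF that(2)] psd_B[OF i]]
        by (simp add: x_real[OF that(1) i] y_real[OF that(2) i])
    qed
    finally show ?thesis
      by (simp add: Re_sum)
  qed
  have "Re (\<Sum>j<d. ctrace (kron (P (\<sigma> j)) (Q (\<tau> j)) * \<rho>)) = (\<Sum>j<d. Re (ctrace (kron (P (\<sigma> j)) (Q (\<tau> j)) * \<rho>)))"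
    by (rule Re_sum)
  also have "\<dots> = (\<Sum>j<d. \<Sum>i<m. p i * (x i (\<sigma> j) * y i (\<tau> j)))"
    using \<sigma>(2) \<tau>(2) by (intro sum.cong refl summand) auto
  also have "\<dots> = (\<Sum>i<m. p i * (\<Sum>j<d. x i (\<sigma> j) * y i (\<tau> j)))"
    by (subst sum.swap) (simp add: sum_distrib_left)
  also have "\<dots> \<le> (\<Sum>i<m. p i * (sqrt ?c1 * sqrt ?c2))"
  proof (intro sum_mono mult_left_mono)
    fix i assume "i \<in> {..<m}"
    then have i: "i < m" by simp
    show "(\<Sum>j<d. x i (\<sigma> j) * y i (\<tau> j)) \<le> sqrt ?c1 * sqrt ?c2"
      using \<sigma> \<tau> gen_sic_povm_sum_sq_le[OF d1 P, of "A i"] gen_sic_povm_sum_sq_le[OF d2 Q, of "B i"] mix[OF i]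
      unfolding x_def y_def by (intro sum_inj_mult_le_sqrt) auto
    show "0 \<le> p i"
      using mix[OF i] by simp
  qed
  also have "\<dots> = sqrt ?c1 * sqrt ?c2"
    using p_sum by (simp flip: sum_distrib_right)
  finally show ?thesis .
qed

lemma J_sic_le:
  assumes bound: "\<And>\<sigma> \<tau>. inj_on \<sigma> {..<min (d1\<^sup>2) (d2\<^sup>2)} \<Longrightarrow> \<sigma> ` {..<min (d1\<^sup>2) (d2\<^sup>2)} \<subseteq> {..<d1\<^sup>2} \<Longrightarrow>
      inj_on \<tau> {..<min (d1\<^sup>2) (d2\<^sup>2)} \<Longrightarrow> \<tau> ` {..<min (d1\<^sup>2) (d2\<^sup>2)} \<subseteq> {..<d2\<^sup>2} \<Longrightarrow>
      Re (\<Sum>j<min (d1\<^sup>2) (d2\<^sup>2). ctrace (kron (P (\<sigma> j)) (Q (\<tau> j)) * \<rho>)) \<le> c"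
  shows "J_sic d1 d2 P Q \<rho> \<le> c"
proof -
  define d where "d = min (d1\<^sup>2) (d2\<^sup>2)"
  define f where "f \<sigma> \<tau> = Re (\<Sum>j<d. ctrace (kron (P (\<sigma> j)) (Q (\<tau> j)) * \<rho>))" for \<sigma> \<tau>
  define adm where "adm N \<sigma> \<longleftrightarrow> \<sigma> \<in> {..<d} \<rightarrow>\<^sub>E {..<N} \<and> inj_on \<sigma> {..<d}" for N :: nat and \<sigma>
  define V where "V = {f \<sigma> \<tau> | \<sigma> \<tau>. adm (d1\<^sup>2) \<sigma> \<and> adm (d2\<^sup>2) \<tau>}"
  have J: "J_sic d1 d2 P Q \<rho> = Max V"
    unfolding J_sic_def Let_def V_def f_def adm_def d_def by (simp add: conj_assoc)
  have "V \<subseteq> (\<lambda>(\<sigma>, \<tau>). f \<sigma> \<tau>) ` (({..<d} \<rightarrow>\<^sub>E {..<d1\<^sup>2}) \<times> ({..<d} \<rightarrow>\<^sub>E {..<d2\<^sup>2}))"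
    unfolding V_def adm_def by auto
  then have "finite V"
    by (rule finite_subset) (intro finite_imageI finite_cartesian_product finite_PiE; simp)
  moreover have "V \<noteq> {}"
  proof -
    have "adm (d1\<^sup>2) (restrict id {..<d})" "adm (d2\<^sup>2) (restrict id {..<d})"
      unfolding adm_def d_def by (auto simp: restrict_PiE_iff)
    then show ?thesis
      unfolding V_def by blast
  qed
  moreover have "v \<le> c" if "v \<in> V" for v
  proof -
    from \<open>v \<in> V\<close> obtain \<sigma> \<tau> where v: "v = f \<sigma> \<tau>" and "adm (d1\<^sup>2) \<sigma>" "adm (d2\<^sup>2) \<tau>"
      unfolding V_def by blast
    then show ?thesis
      unfolding v f_def d_def adm_def by (intro bound) (auto simp: PiE_iff)
  qed
  ultimately show ?thesis
    unfolding J by (rule Max.boundedI)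
qed

theorem theorem2:
  fixes d1 d2 :: nat and a1 a2 :: real and P Q :: "nat \<Rightarrow> complex mat" and \<rho> :: "complex mat"
  assumes "d1 \<ge> 2" and "d2 \<ge> 2"
    and "density (d1 * d2) \<rho>"
    and "gen_sic_povm d1 a1 P" and "gen_sic_povm d2 a2 Q"
    and "separable d1 d2 \<rho>"
  shows "J_sic d1 d2 P Q \<rho> \<le>
           sqrt ((a1 * real d1 ^ 2 + 1) / (real d1 * (real d1 + 1))) *
           sqrt ((a2 * real d2 ^ 2 + 1) / (real d2 * (real d2 + 1)))"
  using separable_sic_correlation_le[OF assms(1,2,4,5,6)] by (rule J_sic_le)

end
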